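(* Let $R$ be a ring and $n$ a positive integer such that every proper ideal of $R$ is a weakly $n$-absorbing ideal of $R$. Then: (1) $\dim(R)=0$; (2) $R$ has at most $n+1$ prime ideals that are pairwise comaximal; in particular, $R$ has at most $n+1$ maximal ideals.
   Context: All rings are commutative with $1\neq0$. A proper ideal $I$ of $R$ is weakly $n$-absorbing if whenever $0\neq a_1\cdots a_{n+1}\in I$ with $a_1,\dots,a_{n+1}\in R$, there are $n$ of the $a_i$'s whose product is in $I$. $\dim(R)$ is the Krull dimension. *)

theory Defs
  imports "HOL-Algebra.Algebra" "HOL-Library.Extended_Nat"
begin

definition weakly_n_absorbing :: "('a, 'b) ring_scheme \<Rightarrow> nat \<Rightarrow> 'a set \<Rightarrow> bool" where
  "weakly_n_absorbing R n I \<longleftrightarrow>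
     ideal I R \<and> I \<noteq> carrier R \<and>
     (\<forall>a. a \<in> {..n} \<rightarrow> carrier R \<longrightarrow>
        finprod R a {..n} \<noteq> \<zero>\<^bsub>R\<^esub> \<longrightarrow> finprod R a {..n} \<in> I \<longrightarrow>
        (\<exists>j\<le>n. finprod R a ({..n} - {j}) \<in> I))"

definition krull_dim :: "('a, 'b) ring_scheme \<Rightarrow> enat" where
  "krull_dim R = Sup {enat (length ps - 1) | ps. ps \<noteq> [] \<and>
      (\<forall>P\<in>set ps. primeideal P R) \<and> sorted_wrt (\<subset>) ps}"

definition comaximal :: "('a, 'b) ring_scheme \<Rightarrow> 'a set \<Rightarrow> 'a set \<Rightarrow> bool" where
  "comaximal R I J \<longleftrightarrow> I <+>\<^bsub>R\<^esub> J = carrier R"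

end

theory Submission imports Defs begin

(* If P \<subset> Q are primes and x \<in> Q - P, then x^(n+1) is a nonzero element of the proper ideal
   P + (x^(n+1)) \<subseteq> Q, so absorption gives x^n = p + r x^(n+1) with p \<in> P; primality of P then
   puts 1 - r x into P \<subseteq> Q, contradicting r x \<in> Q.  Hence dim R = 0.
   Given n + 2 pairwise comaximal primes P_0, ..., P_(n+1), the Chinese remainder theorem yields
   e_i \<in> P_i lying in no other P_k.  Their product e_0 \<dots> e_n lies in P_0 \<inter> \<dots> \<inter> P_n but not in
   P_(n+1), so it is nonzero, yet omitting e_j leaves a product outside P_j. *)

context cring begin

lemma primeideal_one_notin:
  assumes "primeideal P R"
  shows "\<one> \<notin> P"
  using assms ideal.one_imp_carrier primeideal.I_notcarr primeideal.axioms(1) by metis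

lemma notin_ideal_if_one_minus_in:
  assumes "ideal I R" "I \<noteq> carrier R" "a \<in> carrier R" "\<one> \<ominus> a \<in> I"
  shows "a \<notin> I"
proof
  assume "a \<in> I"
  with assms have "(\<one> \<ominus> a) \<oplus> a \<in> I"
    by (meson additive_subgroup.a_closed ideal.axioms(1))
  moreover have "(\<one> \<ominus> a) \<oplus> a = \<one>" using assms(3) by algebra
  ultimately show False using assms(1,2) ideal.one_imp_carrier by metis
qed

lemma finprod_in_ideal:
  assumes "ideal I R" "finite A" "f \<in> A \<rightarrow> carrier R" "j \<in> A" "f j \<in> I"
  shows "finprod R f A \<in> I"
proof -
  have "finprod R f A = finprod R f (insert j (A - {j}))"
    using assms(4) by (simp add: insert_absorb)
  also have "\<dots> = f j \<otimes> finprod R f (A - {j})"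
    using assms(2-4) by (intro finprod_insert) auto
  finally have "finprod R f A = f j \<otimes> finprod R f (A - {j})" .
  moreover have "finprod R f (A - {j}) \<in> carrier R"
    using assms(3) by (intro finprod_closed) auto
  ultimately show ?thesis using ideal.I_r_closed[OF assms(1) assms(5)] by simp
qed

lemma finprod_notin_primeideal:
  assumes "primeideal P R" "finite A" "f \<in> A \<rightarrow> carrier R" "\<And>k. k \<in> A \<Longrightarrow> f k \<notin> P"
  shows "finprod R f A \<notin> P"
  using assms(2-4)
proof (induction A rule: finite_induct)
  case empty
  then show ?case using primeideal_one_notin[OF assms(1)] by simp
next
  case (insert x F)
  then have "f x \<in> carrier R" "finprod R f F \<in> carrier R" "f x \<notin> P" "finprod R f F \<notin> P"
    by (auto intro: finprod_closed)
  moreover have "finprod R f (insert x F) = f x \<otimes> finprod R f F"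
    using insert by (intro finprod_insert) auto
  ultimately show ?case using primeideal.I_prime[OF assms(1)] by metis
qed

lemma primeideal_pow_notin:
  fixes k :: nat
  assumes "primeideal P R" "x \<in> carrier R" "x \<notin> P"
  shows "x [^] k \<notin> P"
proof (induction k)
  case 0
  then show ?case using primeideal_one_notin[OF assms(1)] by simp
next
  case (Suc k)
  then show ?case using primeideal.I_prime[OF assms(1), of "x [^] k" x] assms(2,3) by auto
qed

lemma weakly_n_absorbing_power:
  assumes "weakly_n_absorbing R n I" "x \<in> carrier R"
    and "x [^] Suc n \<noteq> \<zero>" "x [^] Suc n \<in> I"
  shows "x [^] n \<in> I"
proof -
  have const: "finprod R (\<lambda>_. x) A = x [^] card A" for A
    using finprod_const[OF assms(2)] .
  have "finprod R (\<lambda>_. x) {..n} = x [^] Suc n" by (simp add: const)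
  then obtain j where "j \<le> n" "finprod R (\<lambda>_. x) ({..n} - {j}) \<in> I"
    using assms unfolding weakly_n_absorbing_def by (metis Pi_I)
  then show ?thesis by (simp add: const)
qed

lemma primeideal_one_minus_multiple:
  assumes P: "primeideal P R" and x: "x \<in> carrier R" "x \<notin> P"
    and "x [^] n \<in> P <+> PIdl (x [^] Suc n)"
  shows "\<exists>r\<in>carrier R. \<one> \<ominus> r \<otimes> x \<in> P"
proof -
  have iP: "ideal P R" using P primeideal.axioms(1) by blast
  obtain p r where pr: "p \<in> P" "r \<in> carrier R" "x [^] n = p \<oplus> r \<otimes> x [^] Suc n"
    using assms(4) unfolding set_add_def' cgenideal_def by blast
  have pc: "p \<in> carrier R" using ideal.Icarr[OF iP pr(1)] .
  have y: "x [^] n \<in> carrier R" "x [^] Suc n = x [^] n \<otimes> x" using x(1) by simp_all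
  have "x [^] n \<otimes> (\<one> \<ominus> r \<otimes> x) = x [^] n \<ominus> r \<otimes> x [^] Suc n"
    unfolding y(2) using y(1) x(1) pr(2) by algebra
  also have "\<dots> = (p \<oplus> r \<otimes> x [^] Suc n) \<ominus> r \<otimes> x [^] Suc n"
    by (simp only: pr(3)[symmetric])
  also have "\<dots> = p" using pc pr(2) x(1) by (simp add: minus_eq a_assoc r_neg)
  finally have "x [^] n \<otimes> (\<one> \<ominus> r \<otimes> x) \<in> P" using pr(1) by simp
  moreover have "x [^] n \<notin> P" using primeideal_pow_notin[OF P x] .
  moreover have "\<one> \<ominus> r \<otimes> x \<in> carrier R" using x(1) pr(2) by simp
  ultimately have "\<one> \<ominus> r \<otimes> x \<in> P"
    using primeideal.I_prime[OF P y(1)] by blast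
  with pr(2) show ?thesis by blast
qed

lemma ideal_subset_carrier:
  assumes "ideal I R"
  shows "I \<subseteq> carrier R"
  using additive_subgroup.a_subset[OF ideal.axioms(1)[OF assms]] .

lemma union_subset_set_add_ideals:
  assumes "ideal I R" "ideal J R"
  shows "I \<union> J \<subseteq> I <+> J"
proof -
  have "I \<union> J \<subseteq> carrier R" using ideal_subset_carrier assms by simp
  then show ?thesis using genideal_self union_genideal[OF assms] by metis
qed

lemma maximalideal_comaximal:
  assumes M: "maximalideal M R" and N: "maximalideal N R" and "M \<noteq> N"
  shows "comaximal R M N"
proof -
  have iM: "ideal M R" and iN: "ideal N R" using M N maximalideal.axioms(1) by blast+
  have sum: "ideal (M <+> N) R" using add_ideals[OF iM iN] .
  have MN: "M \<union> N \<subseteq> M <+> N" using union_subset_set_add_ideals[OF iM iN] .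
  have "\<not> N \<subseteq> M"
    using maximalideal.I_maximal[OF N iM _ ideal_subset_carrier[OF iM]] assms(3)
      maximalideal.I_notcarr[OF M] by auto
  then have "M <+> N \<noteq> M" using MN by blast
  then show ?thesis
    using maximalideal.I_maximal[OF M sum _ ideal_subset_carrier[OF sum]] MN
    unfolding comaximal_def by blast
qed

lemma comaximal_family_separator:
  assumes "\<And>i. i \<le> Suc n \<Longrightarrow> ideal (I i) R"
    and "\<And>i k. \<lbrakk>i \<le> Suc n; k \<le> Suc n; i \<noteq> k\<rbrakk> \<Longrightarrow> I i <+> I k = carrier R"
    and "j \<le> Suc n"
  shows "\<exists>e\<in>I j. \<forall>k\<le>Suc n. k \<noteq> j \<longrightarrow> \<one> \<ominus> e \<in> I k"
proof -
  have "\<one> \<in> (\<Inter>k\<in>{..Suc n} - {j}. I k) <+> I j"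
    using inter_plus_ideal_eq_carrier_arbitrary[where I = I, OF assms] by simp
  then obtain a e where ae: "a \<in> (\<Inter>k\<in>{..Suc n} - {j}. I k)" "e \<in> I j" "\<one> = a \<oplus> e"
    unfolding set_add_def' by blast
  have "e \<in> carrier R" using ideal.Icarr[OF assms(1)[OF assms(3)] ae(2)] .
  moreover have "a \<in> carrier R"
  proof -
    define k where "k = (if j = 0 then 1 else 0 :: nat)"
    have "k \<le> Suc n" "k \<noteq> j" unfolding k_def by auto
    then show ?thesis using ae(1) ideal.Icarr[OF assms(1)] by blast
  qed
  ultimately have "\<one> \<ominus> e = a" unfolding ae(3) by algebra
  then show ?thesis using ae(1,2) by auto
qed

end

lemma krull_dim_eq_0I:
  assumes "\<And>P Q. \<lbrakk>primeideal P R; primeideal Q R; P \<subseteq> Q\<rbrakk> \<Longrightarrow> P = Q"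
  shows "krull_dim R = 0"
proof -
  have "enat (length ps - 1) \<le> 0"
    if "\<forall>P\<in>set ps. primeideal P R" "sorted_wrt (\<subset>) ps" for ps
  proof (rule ccontr)
    assume "\<not> enat (length ps - 1) \<le> 0"
    then have len: "length ps \<ge> 2" by (simp add: zero_enat_def)
    then have "ps ! 0 \<subset> ps ! 1" using sorted_wrt_nth_less[OF that(2), of 0 1] by simp
    moreover have "ps ! 0 \<in> set ps" "ps ! 1 \<in> set ps" using len by (auto intro!: nth_mem)
    ultimately show False using assms that(1) by blast
  qed
  then have "krull_dim R \<le> 0" unfolding krull_dim_def by (intro Sup_least) blast
  then show ?thesis by simp
qed

locale all_ideals_weakly_n_absorbing = cring +
  fixes n :: nat
  assumes proper_ideal_weakly_n_absorbing:
    "\<lbrakk>ideal I R; I \<noteq> carrier R\<rbrakk> \<Longrightarrow> weakly_n_absorbing R n I"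
begin

lemma primeideal_subset_eq:
  assumes P: "primeideal P R" and Q: "primeideal Q R" and PQ: "P \<subseteq> Q"
  shows "P = Q"
proof (rule ccontr)
  assume "P \<noteq> Q"
  then obtain x where x: "x \<in> Q" "x \<notin> P" using PQ by blast
  have iP: "ideal P R" and iQ: "ideal Q R" using P Q primeideal.axioms(1) by blast+
  have xc: "x \<in> carrier R" using ideal.Icarr[OF iQ x(1)] .
  define J where "J = P <+>\<^bsub>R\<^esub> PIdl (x [^] Suc n)"
  have iX: "ideal (PIdl (x [^] Suc n)) R" using cgenideal_ideal xc by simp
  have iJ: "ideal J R" unfolding J_def using add_ideals[OF iP iX] .
  have PJ: "P \<union> PIdl (x [^] Suc n) \<subseteq> J"
    unfolding J_def using union_subset_set_add_ideals[OF iP iX] .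
  have "x [^] Suc n \<in> Q" using ideal.I_l_closed[OF iQ x(1), of "x [^] n"] xc by simp
  then have "P \<union> PIdl (x [^] Suc n) \<subseteq> Q" using PQ cgenideal_minimal[OF iQ] by blast
  then have JQ: "J \<subseteq> Q"
    unfolding J_def using genideal_minimal[OF iQ] union_genideal[OF iP iX] by metis
  have "J \<noteq> carrier R" using JQ primeideal_one_notin[OF Q] by blast
  moreover have "x [^] Suc n \<in> J" using PJ cgenideal_self[of "x [^] Suc n"] xc by auto
  moreover have "x [^] Suc n \<noteq> \<zero>"
    using primeideal_pow_notin[OF P xc x(2)] additive_subgroup.zero_closed[OF ideal.axioms(1)[OF iP]]
    by metis
  ultimately have "x [^] n \<in> P <+> PIdl (x [^] Suc n)"
    using weakly_n_absorbing_power[OF proper_ideal_weakly_n_absorbing[OF iJ] xc] J_def by blast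
  then obtain r where r: "r \<in> carrier R" "\<one> \<ominus> r \<otimes> x \<in> Q"
    using primeideal_one_minus_multiple[OF P xc x(2)] PQ by blast
  then have "r \<otimes> x \<notin> Q"
    using notin_ideal_if_one_minus_in[OF iQ] primeideal.I_notcarr[OF Q] xc by auto
  then show False using ideal.I_l_closed[OF iQ x(1) r(1)] by blast
qed

lemma no_pairwise_comaximal_primes_family:
  assumes P: "\<And>i. i \<le> Suc n \<Longrightarrow> primeideal (P i) R"
    and comax: "\<And>i k. \<lbrakk>i \<le> Suc n; k \<le> Suc n; i \<noteq> k\<rbrakk> \<Longrightarrow> P i <+> P k = carrier R"
  shows False
proof -
  have iP: "ideal (P i) R" if "i \<le> Suc n" for i using primeideal.axioms(1)[OF P[OF that]] .
  have "\<exists>e. e \<in> P i \<and> (\<forall>k\<le>Suc n. k \<noteq> i \<longrightarrow> e \<notin> P k)" if i: "i \<le> Suc n" for i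
  proof -
    obtain e where e: "e \<in> P i" "\<And>k. \<lbrakk>k \<le> Suc n; k \<noteq> i\<rbrakk> \<Longrightarrow> \<one> \<ominus> e \<in> P k"
      using comaximal_family_separator[where I = P, OF iP comax i] by blast
    have "e \<in> carrier R" using ideal.Icarr[OF iP[OF i] e(1)] .
    then have "e \<notin> P k" if "k \<le> Suc n" "k \<noteq> i" for k
      using notin_ideal_if_one_minus_in[OF iP[OF that(1)]] primeideal.I_notcarr[OF P[OF that(1)]]
        e(2)[OF that] by auto
    with e(1) show ?thesis by blast
  qed
  then obtain e where e_in: "\<And>i. i \<le> Suc n \<Longrightarrow> e i \<in> P i"
    and e_notin: "\<And>i k. \<lbrakk>i \<le> Suc n; k \<le> Suc n; k \<noteq> i\<rbrakk> \<Longrightarrow> e i \<notin> P k"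
    by metis
  have e_carr: "e \<in> {..n} \<rightarrow> carrier R" using ideal.Icarr[OF iP e_in] by simp
  define I where "I = (\<Inter>i\<le>n. P i)"
  have iI: "ideal I R" unfolding I_def using iP by (intro i_Intersect) auto
  have "I \<noteq> carrier R" unfolding I_def using primeideal_one_notin[OF P, of 0] by blast
  moreover have "finprod R e {..n} \<in> I"
    unfolding I_def using finprod_in_ideal[OF iP _ e_carr] e_in by simp
  moreover have "finprod R e {..n} \<notin> P (Suc n)"
    using finprod_notin_primeideal[OF P _ e_carr] e_notin by simp
  then have "finprod R e {..n} \<noteq> \<zero>"
    using additive_subgroup.zero_closed[OF ideal.axioms(1)[OF iP]] by force
  ultimately obtain j where j: "j \<le> n" "finprod R e ({..n} - {j}) \<in> I"
    using proper_ideal_weakly_n_absorbing[OF iI] e_carr unfolding weakly_n_absorbing_def by blast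
  then have "finprod R e ({..n} - {j}) \<in> P j" unfolding I_def by blast
  moreover have "finprod R e ({..n} - {j}) \<notin> P j"
    using j(1) e_carr e_notin by (intro finprod_notin_primeideal[OF P]) auto
  ultimately show False by blast
qed

lemma finite_card_pairwise_comaximal_primes:
  assumes "\<And>P. P \<in> S \<Longrightarrow> primeideal P R"
    and "\<And>P Q. \<lbrakk>P \<in> S; Q \<in> S; P \<noteq> Q\<rbrakk> \<Longrightarrow> comaximal R P Q"
  shows "finite S \<and> card S \<le> n + 1"
proof (rule ccontr)
  assume "\<not> (finite S \<and> card S \<le> n + 1)"
  then obtain T where T: "T \<subseteq> S" "finite T" "card T = Suc (Suc n)"
  proof (cases "finite S")
    case True
    then show ?thesis
      using that obtain_subset_with_card_n[of "Suc (Suc n)" S] \<open>\<not> (finite S \<and> card S \<le> n + 1)\<close>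
      by force
  next
    case False
    then show ?thesis using that infinite_arbitrarily_large by blast
  qed
  then obtain f where f: "bij_betw f {..Suc n} T"
    using finite_same_card_bij[of "{..Suc n}" T] by auto
  show False
  proof (rule no_pairwise_comaximal_primes_family)
    show "primeideal (f i) R" if "i \<le> Suc n" for i
      using assms(1) T(1) bij_betwE[OF f] that by auto
    show "f i <+> f k = carrier R" if "i \<le> Suc n" "k \<le> Suc n" "i \<noteq> k" for i k
    proof -
      have "f i \<in> S" "f k \<in> S" "f i \<noteq> f k"
        using T(1) bij_betwE[OF f] bij_betw_imp_inj_on[OF f] that unfolding inj_on_def by auto
      then show ?thesis using assms(2) unfolding comaximal_def by blast
    qed
  qed
qed

end

theorem mainTheorem7:
  fixes R (structure) and n :: nat
  assumes "cring R" and "\<one>\<^bsub>R\<^esub> \<noteq> \<zero>\<^bsub>R\<^esub>" and "n > 0"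
    and "\<And>I. ideal I R \<Longrightarrow> I \<noteq> carrier R \<Longrightarrow> weakly_n_absorbing R n I"
  shows "krull_dim R = 0 \<and>
         (\<forall>S. (\<forall>P\<in>S. primeideal P R) \<longrightarrow>
            (\<forall>P\<in>S. \<forall>Q\<in>S. P \<noteq> Q \<longrightarrow> comaximal R P Q) \<longrightarrow>
            finite S \<and> card S \<le> n + 1) \<and>
         finite {M. maximalideal M R} \<and> card {M. maximalideal M R} \<le> n + 1"
proof -
  interpret all_ideals_weakly_n_absorbing R n
    unfolding all_ideals_weakly_n_absorbing_def all_ideals_weakly_n_absorbing_axioms_def
    using assms(1,4) by blast
  have "krull_dim R = 0" by (rule krull_dim_eq_0I, rule primeideal_subset_eq)
  moreover have comaximal_primes: "\<forall>S. (\<forall>P\<in>S. primeideal P R) \<longrightarrow>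
      (\<forall>P\<in>S. \<forall>Q\<in>S. P \<noteq> Q \<longrightarrow> comaximal R P Q) \<longrightarrow> finite S \<and> card S \<le> n + 1"
    by (intro allI impI finite_card_pairwise_comaximal_primes) auto
  moreover have "finite {M. maximalideal M R} \<and> card {M. maximalideal M R} \<le> n + 1"
    using comaximal_primes[rule_format, of "{M. maximalideal M R}"]
      maximalideal_prime maximalideal_comaximal by auto
  ultimately show ?thesis by blast
qed

end
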